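(* Let $G=A*_C B$ be an amalgamated free product and let $P$ be a normal subsemigroup of $A$ with $P\cap C=\emptyset$. If $n\ge1$, $d_1,\dots,d_n\in P$ and $f_1,\dots,f_n\in G\setminus A$, then $d_1^{f_1}\cdots d_n^{f_n}\notin A$.
   Context: Notation $x^y=y^{-1}xy$. A normal subsemigroup of a group $H$ is a (possibly empty) subset closed under multiplication and under conjugation by elements of $H$. *)

theory Defs
  imports "HOL-Algebra.Algebra"
begin

definition mprod :: "('a, 'b) monoid_scheme \<Rightarrow> 'a list \<Rightarrow> 'a" where
  "mprod G xs = foldr (\<lambda>x y. x \<otimes>\<^bsub>G\<^esub> y) xs \<one>\<^bsub>G\<^esub>"

definition conjg :: "('a, 'b) monoid_scheme \<Rightarrow> 'a \<Rightarrow> 'a \<Rightarrow> 'a" where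
  "conjg G x y = inv\<^bsub>G\<^esub> y \<otimes>\<^bsub>G\<^esub> x \<otimes>\<^bsub>G\<^esub> y"

definition reduced_word :: "'a set \<Rightarrow> 'a set \<Rightarrow> 'a set \<Rightarrow> 'a list \<Rightarrow> bool" where
  "reduced_word A B C ws \<longleftrightarrow> ws \<noteq> [] \<and> set ws \<subseteq> (A - C) \<union> (B - C) \<and>
     (\<forall>i. Suc i < length ws \<longrightarrow> (ws ! i \<in> A \<longleftrightarrow> ws ! Suc i \<notin> A))"

text \<open>G is the (internal) amalgamated free product A *_C B: A, B subgroups of G with
  A \<inter> B = C, A \<union> B generates G, and no reduced word represents the identity
  (normal form theorem; equivalent to the universal property).\<close>
definition amalgamated_free_product ::
  "('a, 'b) monoid_scheme \<Rightarrow> 'a set \<Rightarrow> 'a set \<Rightarrow> 'a set \<Rightarrow> bool" where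
  "amalgamated_free_product G A B C \<longleftrightarrow>
     group G \<and> subgroup A G \<and> subgroup B G \<and> A \<inter> B = C \<and>
     generate G (A \<union> B) = carrier G \<and>
     (\<forall>ws. reduced_word A B C ws \<longrightarrow> mprod G ws \<noteq> \<one>\<^bsub>G\<^esub>)"

definition normal_subsemigroup :: "('a, 'b) monoid_scheme \<Rightarrow> 'a set \<Rightarrow> 'a set \<Rightarrow> bool" where
  "normal_subsemigroup G P A \<longleftrightarrow> P \<subseteq> A \<and>
     (\<forall>x\<in>P. \<forall>y\<in>P. x \<otimes>\<^bsub>G\<^esub> y \<in> P) \<and>
     (\<forall>x\<in>P. \<forall>h\<in>A. conjg G x h \<in> P)"

end

theory Submission
  imports Defs
begin

text \<open>
  Every element of \<open>G\<close> can be written as \<open>w c\<close> with \<open>c \<in> C\<close> and \<open>w\<close> a reduced word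
  in the letters \<open>(A - C) \<union> (B - C)\<close>. The set \<open>Q = P C\<close> is a cone in \<open>A\<close>: it is closed
  under products and under multiplication by \<open>C\<close> on either side, and \<open>1 \<notin> Q\<close>. Give a letter
  polarity \<open>1\<close> if it lies in \<open>Q\<close>, \<open>-1\<close> if its inverse does, and \<open>0\<close> otherwise; the inner
  polarity of a word is the sum over all its letters except the first and the last.

  Writing \<open>f = a u\<close> with \<open>a \<in> A\<close> and \<open>u\<close> a reduced word starting outside \<open>A\<close>, the
  conjugate \<open>d\<^sup>f = u\<^sup>-\<^sup>1 d\<^sup>a u\<close> is a reduced word of inner polarity \<open>1\<close>. When two reduced
  words are multiplied, letters cancel in pairs of opposite polarity and at most one merge
  of two letters occurs, which costs at most \<open>1\<close> since polarity is superadditive up to \<open>1\<close>.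
  Hence words of positive inner polarity are closed under multiplication. Such a word has at
  least three letters, so it does not represent an element of \<open>A\<close>.
\<close>

lemma (in monoid) mprod_Nil [simp]: "mprod G [] = \<one>"
  by (simp add: mprod_def)

lemma (in monoid) mprod_Cons [simp]: "mprod G (x # xs) = x \<otimes> mprod G xs"
  by (simp add: mprod_def)

lemma (in monoid) mprod_closed [simp]: "set xs \<subseteq> carrier G \<Longrightarrow> mprod G xs \<in> carrier G"
  by (induction xs) auto

lemma (in monoid) mprod_append:
  "set xs \<subseteq> carrier G \<Longrightarrow> set ys \<subseteq> carrier G \<Longrightarrow> mprod G (xs @ ys) = mprod G xs \<otimes> mprod G ys"
  by (induction xs) (auto simp: m_assoc)

lemma (in monoid) mprod_in_subsemigroup:
  assumes "S \<subseteq> carrier G" "\<And>x y. x \<in> S \<Longrightarrow> y \<in> S \<Longrightarrow> x \<otimes> y \<in> S" "set xs \<subseteq> S" "xs \<noteq> []"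
  shows "mprod G xs \<in> S"
  using assms(3,4)
proof (induction xs)
  case (Cons x xs)
  then show ?case
    using assms(1,2) by (cases "xs = []") auto
qed simp

lemma (in group) inv_mprod:
  "set xs \<subseteq> carrier G \<Longrightarrow> inv (mprod G xs) = mprod G (rev (map (\<lambda>x. inv x) xs))"
proof (induction xs)
  case (Cons x xs)
  then have "set (rev (map (\<lambda>x. inv x) xs)) \<subseteq> carrier G"
    by auto
  with Cons show ?case
    by (simp add: inv_mult_group mprod_append)
qed simp

lemma (in group) conjg_mult:
  "x \<in> carrier G \<Longrightarrow> y \<in> carrier G \<Longrightarrow> z \<in> carrier G \<Longrightarrow> conjg G x (y \<otimes> z) = conjg G (conjg G x y) z"
  by (simp add: conjg_def inv_mult_group m_assoc)

section \<open>Reduced words in an amalgamated free product\<close>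

locale amalgam = group G for G (structure) +
  fixes A B C :: "'a set"
  assumes subgroup_A: "subgroup A G" and subgroup_B: "subgroup B G"
    and A_inter_B: "A \<inter> B = C"
    and generate_A_B: "generate G (A \<union> B) = carrier G"
    and reduced_word_ne_one: "reduced_word A B C ws \<Longrightarrow> mprod G ws \<noteq> \<one>"

lemma amalgam_if_amalgamated_free_product:
  "amalgamated_free_product G A B C \<Longrightarrow> amalgam G A B C"
  by (simp add: amalgamated_free_product_def amalgam_def amalgam_axioms_def)

context amalgam
begin

sublocale A: subgroup A G by (rule subgroup_A)
sublocale B: subgroup B G by (rule subgroup_B)
sublocale C: subgroup C G
  using subgroups_Inter_pair[OF subgroup_A subgroup_B] by (simp add: A_inter_B)

lemma C_subset_A: "C \<subseteq> A" and C_subset_B: "C \<subseteq> B"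
  using A_inter_B by auto

definition letters :: "'a set" where
  "letters = (A - C) \<union> (B - C)"

definition alternate :: "'a \<Rightarrow> 'a \<Rightarrow> bool" where
  "alternate x y \<longleftrightarrow> (x \<in> A \<longleftrightarrow> y \<notin> A)"

definition reduced :: "'a list \<Rightarrow> bool" where
  "reduced ws \<longleftrightarrow> set ws \<subseteq> letters \<and> successively alternate ws"

lemma letters_carrier: "x \<in> letters \<Longrightarrow> x \<in> carrier G"
  unfolding letters_def using A.subset B.subset by blast

lemma letter_in_factor:
  assumes "x \<in> letters" "z \<notin> C" "x \<in> A \<Longrightarrow> z \<in> A" "x \<in> B \<Longrightarrow> z \<in> B"
  shows "z \<in> letters" "z \<in> A \<longleftrightarrow> x \<in> A"
  using assms A_inter_B unfolding letters_def by auto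

lemma letter_mult_C:
  assumes "x \<in> letters" "c \<in> C"
  shows "x \<otimes> c \<in> letters" "x \<otimes> c \<in> A \<longleftrightarrow> x \<in> A"
proof -
  have "x \<otimes> c \<notin> C"
  proof
    assume "x \<otimes> c \<in> C"
    then have "x \<otimes> c \<otimes> inv c \<in> C"
      using assms(2) by blast
    then show False
      using assms letters_carrier unfolding letters_def by (simp add: m_assoc)
  qed
  moreover have "x \<in> A \<Longrightarrow> x \<otimes> c \<in> A" "x \<in> B \<Longrightarrow> x \<otimes> c \<in> B"
    using assms(2) C_subset_A C_subset_B by auto
  ultimately show "x \<otimes> c \<in> letters" "x \<otimes> c \<in> A \<longleftrightarrow> x \<in> A"
    using letter_in_factor[OF assms(1)] by auto
qed

lemma C_mult_letter:
  assumes "x \<in> letters" "c \<in> C"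
  shows "c \<otimes> x \<in> letters" "c \<otimes> x \<in> A \<longleftrightarrow> x \<in> A"
proof -
  have "c \<otimes> x \<notin> C"
  proof
    assume "c \<otimes> x \<in> C"
    then have "inv c \<otimes> (c \<otimes> x) \<in> C"
      using assms(2) by blast
    then show False
      using assms letters_carrier unfolding letters_def by (simp add: m_assoc[symmetric])
  qed
  moreover have "x \<in> A \<Longrightarrow> c \<otimes> x \<in> A" "x \<in> B \<Longrightarrow> c \<otimes> x \<in> B"
    using assms(2) C_subset_A C_subset_B by auto
  ultimately show "c \<otimes> x \<in> letters" "c \<otimes> x \<in> A \<longleftrightarrow> x \<in> A"
    using letter_in_factor[OF assms(1)] by auto
qed

lemma inv_letter:
  assumes "x \<in> letters"
  shows "inv x \<in> letters" "inv x \<in> A \<longleftrightarrow> x \<in> A"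
proof -
  have "inv x \<notin> C"
    using assms letters_carrier C.m_inv_closed unfolding letters_def by fastforce
  then show "inv x \<in> letters" "inv x \<in> A \<longleftrightarrow> x \<in> A"
    using letter_in_factor[OF assms] by auto
qed

lemma merge_letters:
  assumes "x \<in> letters" "y \<in> letters" "\<not> alternate x y" "c \<in> C" "x \<otimes> c \<otimes> y \<notin> C"
  shows "x \<otimes> c \<otimes> y \<in> letters" "x \<otimes> c \<otimes> y \<in> A \<longleftrightarrow> x \<in> A"
proof -
  have "x \<in> A \<longleftrightarrow> y \<in> A"
    using assms(3) unfolding alternate_def by blast
  then have "x \<in> A \<Longrightarrow> x \<otimes> c \<otimes> y \<in> A" "x \<in> B \<Longrightarrow> x \<otimes> c \<otimes> y \<in> B"
    using assms(1,2,4) C_subset_A C_subset_B A_inter_B unfolding letters_def by auto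
  then show "x \<otimes> c \<otimes> y \<in> letters" "x \<otimes> c \<otimes> y \<in> A \<longleftrightarrow> x \<in> A"
    using letter_in_factor[OF assms(1,5)] by auto
qed

lemma reduced_Nil [simp]: "reduced []"
  by (simp add: reduced_def)

lemma reduced_append:
  "reduced (xs @ ys) \<longleftrightarrow>
     reduced xs \<and> reduced ys \<and> (xs = [] \<or> ys = [] \<or> alternate (last xs) (hd ys))"
  unfolding reduced_def successively_append_iff by auto

lemma reduced_Cons:
  "reduced (x # ys) \<longleftrightarrow> x \<in> letters \<and> reduced ys \<and> (ys = [] \<or> alternate x (hd ys))"
  using reduced_append[of "[x]" ys] by (auto simp: reduced_def)

lemma reduced_snoc:
  "reduced (xs @ [x]) \<longleftrightarrow> x \<in> letters \<and> reduced xs \<and> (xs = [] \<or> alternate (last xs) x)"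
  using reduced_append[of xs "[x]"] by (auto simp: reduced_def)

lemma reduced_carrier: "reduced ws \<Longrightarrow> set ws \<subseteq> carrier G"
  unfolding reduced_def using letters_carrier by blast

lemma reduced_ne_one:
  assumes "reduced ws" "ws \<noteq> []"
  shows "mprod G ws \<noteq> \<one>"
proof -
  have "reduced_word A B C ws"
    using assms unfolding reduced_def reduced_word_def letters_def alternate_def
      successively_conv_nth by auto
  then show ?thesis
    by (rule reduced_word_ne_one)
qed

lemma reduced_snoc_mult_C:
  "reduced (xs @ [x]) \<Longrightarrow> c \<in> C \<Longrightarrow> reduced (xs @ [x \<otimes> c])"
  using letter_mult_C unfolding reduced_snoc alternate_def by auto

lemma reduced_Cons_C_mult:
  "reduced (x # xs) \<Longrightarrow> c \<in> C \<Longrightarrow> reduced ((c \<otimes> x) # xs)"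
  using C_mult_letter unfolding reduced_Cons alternate_def by auto

lemma reduced_mult_C_ne_one:
  assumes "reduced ws" "ws \<noteq> []" "c \<in> C"
  shows "mprod G ws \<otimes> c \<noteq> \<one>"
proof -
  obtain xs x where ws: "ws = xs @ [x]"
    using assms(2) rev_exhaust by blast
  have "set xs \<subseteq> carrier G" "x \<in> carrier G" "c \<in> carrier G"
    using reduced_carrier[OF assms(1)] assms(3) ws by auto
  then have "mprod G ws \<otimes> c = mprod G (xs @ [x \<otimes> c])"
    by (simp add: ws mprod_append m_assoc)
  then show ?thesis
    using reduced_ne_one reduced_snoc_mult_C assms ws by simp
qed

lemma reduced_rev_inv: "reduced ws \<Longrightarrow> reduced (rev (map (\<lambda>x. inv x) ws))"
  unfolding reduced_def
  by (auto simp: successively_map inv_letter alternate_def elim!: successively_mono)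

lemma reduced_junction_cases:
  assumes xs: "reduced (xs @ [x])" and ys: "reduced (y # ys)" and c: "c \<in> C"
  obtains (alternate) "alternate x y" "reduced (xs @ (x \<otimes> c) # y # ys)"
    | (merge) "reduced (xs @ (x \<otimes> c \<otimes> y) # ys)"
    | (cancel) "x \<otimes> c \<otimes> y \<in> C"
proof -
  have x: "x \<in> letters" "xs = [] \<or> alternate (last xs) x"
    and y: "y \<in> letters" "ys = [] \<or> alternate y (hd ys)"
    using xs ys unfolding reduced_snoc reduced_Cons by auto
  consider "alternate x y" | "\<not> alternate x y" "x \<otimes> c \<otimes> y \<notin> C" | "x \<otimes> c \<otimes> y \<in> C"
    by blast
  then show thesis
  proof cases
    case 1
    then have "reduced (xs @ [x \<otimes> c] @ y # ys)"
      using reduced_snoc_mult_C[OF xs c] ys letter_mult_C[OF x(1) c]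
      unfolding reduced_append alternate_def by auto
    then show thesis
      using 1 alternate by simp
  next
    case 2
    then have "reduced (xs @ [x \<otimes> c \<otimes> y] @ ys)"
      using xs ys x y merge_letters[OF x(1) y(1) _ c]
      unfolding reduced_append reduced_snoc reduced_Cons alternate_def by auto
    then show thesis
      using merge by simp
  qed (rule cancel)
qed

lemma reduced_mult_A_ne_one:
  assumes "reduced ws" "ws \<noteq> []" "last ws \<notin> A" "a \<in> A"
  shows "mprod G ws \<otimes> a \<noteq> \<one>"
proof (cases "a \<in> C")
  case False
  then have "reduced (ws @ [a])"
    using assms unfolding reduced_snoc letters_def alternate_def by auto
  moreover have "mprod G (ws @ [a]) = mprod G ws \<otimes> a"
    using reduced_carrier[OF assms(1)] assms(4) by (simp add: mprod_append)
  ultimately show ?thesis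
    using reduced_ne_one by fastforce
qed (use assms reduced_mult_C_ne_one in blast)

lemma reduced_mult_C_notin_A:
  assumes ws: "reduced ws" "2 \<le> length ws" and c: "c \<in> C"
  shows "mprod G ws \<otimes> c \<notin> A"
proof
  assume in_A: "mprod G ws \<otimes> c \<in> A"
  obtain xs x where ws_eq: "ws = xs @ [x]"
    using ws(2) by (cases ws rule: rev_cases) auto
  with ws(2) have "xs \<noteq> []"
    by auto
  have carrier: "set xs \<subseteq> carrier G" "x \<in> carrier G" "c \<in> carrier G"
    using reduced_carrier[OF ws(1)] c ws_eq by auto
  define e where "e = c \<otimes> inv (mprod G ws \<otimes> c)"
  have "e \<in> A"
    using in_A c C_subset_A unfolding e_def by auto
  have "mprod G ws \<otimes> e = \<one>"
    using reduced_carrier[OF ws(1)] c by (simp add: e_def m_assoc[symmetric])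
  then have one: "mprod G xs \<otimes> (x \<otimes> e) = \<one>"
    using carrier \<open>e \<in> A\<close> by (simp add: ws_eq mprod_append m_assoc)
  show False
  proof (cases "x \<in> A")
    case True
    then have "last xs \<notin> A"
      using ws(1) \<open>xs \<noteq> []\<close> unfolding ws_eq reduced_snoc alternate_def by auto
    then show False
      using reduced_mult_A_ne_one[of xs "x \<otimes> e"] one ws(1) True \<open>e \<in> A\<close> \<open>xs \<noteq> []\<close>
      unfolding ws_eq reduced_snoc by auto
  next
    case False
    then show False
      using reduced_mult_A_ne_one[of ws e] \<open>mprod G ws \<otimes> e = \<one>\<close> ws(1) \<open>e \<in> A\<close>
      by (simp add: ws_eq)
  qed
qed

end

section \<open>Polarity with respect to a cone\<close>

locale amalgam_cone = amalgam +
  fixes Q :: "'a set"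
  assumes cone_subset_A: "Q \<subseteq> A"
    and cone_mult: "x \<in> Q \<Longrightarrow> y \<in> Q \<Longrightarrow> x \<otimes> y \<in> Q"
    and C_mult_cone: "c \<in> C \<Longrightarrow> x \<in> Q \<Longrightarrow> c \<otimes> x \<in> Q"
    and cone_mult_C: "x \<in> Q \<Longrightarrow> c \<in> C \<Longrightarrow> x \<otimes> c \<in> Q"
    and one_notin_cone: "\<one> \<notin> Q"
begin

lemma cone_carrier: "x \<in> Q \<Longrightarrow> x \<in> carrier G"
  using cone_subset_A A.subset by blast

lemma cone_inv_notin: "x \<in> Q \<Longrightarrow> inv x \<notin> Q"
  using cone_mult[of x "inv x"] cone_carrier one_notin_cone by auto

lemma cone_letter:
  assumes x: "x \<in> Q"
  shows "x \<in> letters"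
proof -
  have "x \<notin> C"
    using x C_mult_cone[of "inv x" x] cone_carrier one_notin_cone by auto
  then show ?thesis
    using x cone_subset_A unfolding letters_def by blast
qed

lemma mult_C_in_cone_iff: "x \<in> carrier G \<Longrightarrow> c \<in> C \<Longrightarrow> x \<otimes> c \<in> Q \<longleftrightarrow> x \<in> Q"
  using cone_mult_C[of "x \<otimes> c" "inv c"] cone_mult_C[of x c] by (auto simp: m_assoc)

lemma C_mult_in_cone_iff: "x \<in> carrier G \<Longrightarrow> c \<in> C \<Longrightarrow> c \<otimes> x \<in> Q \<longleftrightarrow> x \<in> Q"
  using C_mult_cone[of "inv c" "c \<otimes> x"] C_mult_cone[of c x] by (auto simp: m_assoc[symmetric])

definition polarity :: "'a \<Rightarrow> int" where
  "polarity x = (if x \<in> Q then 1 else if inv x \<in> Q then -1 else 0)"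

lemma polarity_bounds: "-1 \<le> polarity x" "polarity x \<le> 1"
  by (simp_all add: polarity_def)

lemma polarity_cone: "x \<in> Q \<Longrightarrow> polarity x = 1"
  by (simp add: polarity_def)

lemma polarity_inv: "x \<in> carrier G \<Longrightarrow> polarity (inv x) = - polarity x"
  using cone_inv_notin[of x] cone_inv_notin[of "inv x"] by (auto simp: polarity_def)

lemma polarity_mult_C: "x \<in> carrier G \<Longrightarrow> c \<in> C \<Longrightarrow> polarity (x \<otimes> c) = polarity x"
  by (simp add: polarity_def inv_mult_group mult_C_in_cone_iff C_mult_in_cone_iff)

lemma polarity_notin_A: "x \<in> carrier G \<Longrightarrow> x \<notin> A \<Longrightarrow> polarity x = 0"
  using cone_subset_A A.m_inv_closed[of "inv x"] by (auto simp: polarity_def)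

lemma polarity_alternate:
  "x \<in> carrier G \<Longrightarrow> y \<in> carrier G \<Longrightarrow> alternate x y \<Longrightarrow> polarity x = 0 \<or> polarity y = 0"
  unfolding alternate_def using polarity_notin_A by blast

lemma polarity_mult:
  assumes x: "x \<in> carrier G" and y: "y \<in> carrier G"
  shows "polarity x + polarity y - 1 \<le> polarity (x \<otimes> y)"
proof -
  have "inv (x \<otimes> y) \<otimes> x = inv y" "y \<otimes> inv (x \<otimes> y) = inv x"
    using x y by (simp_all add: inv_mult_group m_assoc flip: m_assoc[of y "inv y"])
  then have "inv (x \<otimes> y) \<in> Q \<Longrightarrow> x \<in> Q \<Longrightarrow> inv y \<in> Q"
    "inv (x \<otimes> y) \<in> Q \<Longrightarrow> y \<in> Q \<Longrightarrow> inv x \<in> Q"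
    using cone_mult by metis+
  then show ?thesis
    using cone_mult[of x y] cone_inv_notin[of x] cone_inv_notin[of y] by (auto simp: polarity_def)
qed

lemma polarity_cancel:
  assumes "x \<in> carrier G" "y \<in> carrier G" "c \<in> C" "x \<otimes> c \<otimes> y \<in> C"
  shows "polarity x + polarity y = 0"
proof -
  have "y = inv (x \<otimes> c) \<otimes> (x \<otimes> c \<otimes> y)"
    using assms by (simp add: inv_solve_left)
  then have "polarity y = polarity (inv (x \<otimes> c))"
    using assms polarity_mult_C by (metis C.mem_carrier inv_closed m_closed)
  then show ?thesis
    using assms polarity_inv polarity_mult_C by simp
qed

definition inner_polarity :: "'a list \<Rightarrow> int" where
  "inner_polarity ws = (\<Sum>x\<leftarrow>butlast (tl ws). polarity x)"

lemma inner_polarity_Nil [simp]: "inner_polarity [] = 0"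
  by (simp add: inner_polarity_def)

lemma inner_polarity_middle:
  "inner_polarity (xs @ x # ys) = (\<Sum>z\<leftarrow>tl xs. polarity z)
     + (if xs = [] \<or> ys = [] then 0 else polarity x) + (\<Sum>z\<leftarrow>butlast ys. polarity z)"
  by (cases xs) (auto simp: inner_polarity_def butlast_append)

lemma inner_polarity_Cons: "inner_polarity (x # ys) = (\<Sum>z\<leftarrow>butlast ys. polarity z)"
  using inner_polarity_middle[of "[]"] by simp

lemma inner_polarity_snoc: "inner_polarity (xs @ [x]) = (\<Sum>z\<leftarrow>tl xs. polarity z)"
  using inner_polarity_middle[of _ _ "[]"] by simp

lemma inner_polarity_append:
  "xs \<noteq> [] \<Longrightarrow> ys \<noteq> [] \<Longrightarrow>
     inner_polarity (xs @ ys) = (\<Sum>z\<leftarrow>tl xs. polarity z) + (\<Sum>z\<leftarrow>butlast ys. polarity z)"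
  by (cases xs) (auto simp: inner_polarity_def butlast_append)

lemma mult_reduced_no_cancel:
  assumes red: "reduced (xs @ [x])" "reduced (y # ys)" and c: "c \<in> C" and "x \<otimes> c \<otimes> y \<notin> C"
  shows "\<exists>zs c'. reduced zs \<and> c' \<in> C \<and>
           mprod G (xs @ [x]) \<otimes> c \<otimes> mprod G (y # ys) = mprod G zs \<otimes> c' \<and>
           inner_polarity (xs @ [x]) + inner_polarity (y # ys) - 1 \<le> inner_polarity zs \<and>
           inner_polarity ((xs @ [x]) @ y # ys) - 1 \<le> inner_polarity zs"
proof -
  have carrier: "set xs \<subseteq> carrier G" "x \<in> carrier G" "y \<in> carrier G" "set ys \<subseteq> carrier G"
    "c \<in> carrier G"
    using reduced_carrier[OF red(1)] reduced_carrier[OF red(2)] c by auto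
  have prod: "mprod G (xs @ [x]) \<otimes> c \<otimes> mprod G (y # ys) = mprod G xs \<otimes> (x \<otimes> c \<otimes> y) \<otimes> mprod G ys"
    using carrier by (simp add: mprod_append m_assoc)
  note inner = inner_polarity_snoc[of xs x] inner_polarity_Cons[of y ys]
    inner_polarity_middle[of xs x "y # ys"]
  from red c show ?thesis
  proof (cases rule: reduced_junction_cases)
    case alternate
    let ?zs = "xs @ (x \<otimes> c) # y # ys"
    have "inner_polarity ?zs = inner_polarity ((xs @ [x]) @ y # ys)"
      using carrier c by (simp add: inner_polarity_middle polarity_mult_C)
    moreover have "mprod G (xs @ [x]) \<otimes> c \<otimes> mprod G (y # ys) = mprod G ?zs \<otimes> \<one>"
      using carrier by (simp add: mprod_append m_assoc)
    ultimately show ?thesis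
      using alternate polarity_alternate[of x y] polarity_bounds[of x] polarity_bounds[of y]
        inner carrier
      by (intro exI[of _ ?zs] exI[of _ \<one>]) auto
  next
    case merge
    let ?zs = "xs @ (x \<otimes> c \<otimes> y) # ys"
    have "polarity x + polarity y - 1 \<le> polarity (x \<otimes> c \<otimes> y)"
      using polarity_mult[of "x \<otimes> c" y] polarity_mult_C[of x c] carrier c by simp
    moreover have "mprod G (xs @ [x]) \<otimes> c \<otimes> mprod G (y # ys) = mprod G ?zs \<otimes> \<one>"
      using carrier by (simp add: prod mprod_append m_assoc)
    ultimately show ?thesis
      using merge polarity_bounds[of x] polarity_bounds[of y] polarity_bounds[of "x \<otimes> c \<otimes> y"] inner
        inner_polarity_middle[of xs "x \<otimes> c \<otimes> y" ys]
      by (intro exI[of _ ?zs] exI[of _ \<one>]) auto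
  qed (use assms in blast)
qed

lemma mult_reduced_cancel_Cons:
  assumes red: "reduced (y # ys)" and "x \<in> carrier G" "c \<in> C" "x \<otimes> c \<otimes> y \<in> C"
  shows "\<exists>zs c'. reduced zs \<and> c' \<in> C \<and>
           mprod G [x] \<otimes> c \<otimes> mprod G (y # ys) = mprod G zs \<otimes> c' \<and>
           inner_polarity [x] + inner_polarity (y # ys) - 1 \<le> inner_polarity zs \<and>
           inner_polarity ([x] @ y # ys) - 1 \<le> inner_polarity zs"
proof (cases ys)
  case Nil
  then show ?thesis
    using assms reduced_carrier[OF red]
    by (intro exI[of _ "[]"] exI[of _ "x \<otimes> c \<otimes> y"]) (auto simp: inner_polarity_Cons)
next
  case (Cons y' ys')
  let ?zs = "(x \<otimes> c \<otimes> y \<otimes> y') # ys'"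
  have "reduced ?zs" "alternate y y'"
    using red reduced_Cons_C_mult[of y' ys' "x \<otimes> c \<otimes> y"] assms(4)
    unfolding Cons reduced_Cons by auto
  moreover have "set (y # ys) \<subseteq> carrier G"
    using reduced_carrier[OF red] .
  moreover from this have "mprod G [x] \<otimes> c \<otimes> mprod G (y # ys) = mprod G ?zs \<otimes> \<one>"
    using assms by (simp add: Cons m_assoc)
  ultimately show ?thesis
    using polarity_alternate[of y y'] polarity_bounds[of y] polarity_bounds[of y']
    by (intro exI[of _ ?zs] exI[of _ \<one>]) (auto simp: Cons inner_polarity_Cons)
qed

lemma mult_reduced_cancel_snoc:
  assumes red: "reduced (xs @ [x])" and "y \<in> carrier G" "c \<in> C" "x \<otimes> c \<otimes> y \<in> C"
  shows "\<exists>zs c'. reduced zs \<and> c' \<in> C \<and>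
           mprod G (xs @ [x]) \<otimes> c \<otimes> mprod G [y] = mprod G zs \<otimes> c' \<and>
           inner_polarity (xs @ [x]) + inner_polarity [y] - 1 \<le> inner_polarity zs \<and>
           inner_polarity ((xs @ [x]) @ [y]) - 1 \<le> inner_polarity zs"
proof (cases xs rule: rev_cases)
  case Nil
  then show ?thesis
    using assms reduced_carrier[OF red]
    by (intro exI[of _ "[]"] exI[of _ "x \<otimes> c \<otimes> y"]) (auto simp: inner_polarity_Cons)
next
  case (snoc xs' x')
  let ?zs = "xs' @ [x' \<otimes> (x \<otimes> c \<otimes> y)]"
  have "reduced ?zs" "xs' = [] \<or> alternate x' x"
    using red reduced_snoc_mult_C[of xs' x' "x \<otimes> c \<otimes> y"] assms(4)
    unfolding snoc reduced_snoc by auto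
  moreover have "set (xs @ [x]) \<subseteq> carrier G"
    using reduced_carrier[OF red] .
  moreover from this have "mprod G (xs @ [x]) \<otimes> c \<otimes> mprod G [y] = mprod G ?zs \<otimes> \<one>"
    using assms by (simp add: snoc mprod_append m_assoc)
  ultimately show ?thesis
    using polarity_alternate[of x' x] polarity_bounds[of x] polarity_bounds[of x']
    by (intro exI[of _ ?zs] exI[of _ \<one>]) (auto simp: snoc inner_polarity_Cons inner_polarity_middle)
qed

text \<open>
  The bound for the formal concatenation \<open>xs @ ys\<close> is the one that survives the induction:
  a cancelling pair \<open>x, y\<close> has polarities summing to \<open>0\<close>, so removing it from the middle of
  the concatenation does not change its inner polarity.
\<close>

lemma mult_reduced_inner_polarity:
  assumes "reduced xs" "xs \<noteq> []" "reduced ys" "ys \<noteq> []" "c \<in> C"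
  shows "\<exists>zs c'. reduced zs \<and> c' \<in> C \<and> mprod G xs \<otimes> c \<otimes> mprod G ys = mprod G zs \<otimes> c' \<and>
           inner_polarity xs + inner_polarity ys - 1 \<le> inner_polarity zs \<and>
           inner_polarity (xs @ ys) - 1 \<le> inner_polarity zs"
  using assms
proof (induction "length xs" arbitrary: xs ys c rule: less_induct)
  case less
  obtain xs0 x where xs: "xs = xs0 @ [x]"
    using less.prems(2) by (cases xs rule: rev_cases) auto
  obtain y ys0 where ys: "ys = y # ys0"
    using less.prems(4) by (cases ys) auto
  have red: "reduced (xs0 @ [x])" "reduced (y # ys0)" and c: "c \<in> C"
    using less.prems xs ys by auto
  have carrier: "set xs0 \<subseteq> carrier G" "x \<in> carrier G" "y \<in> carrier G" "set ys0 \<subseteq> carrier G"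
    using reduced_carrier[OF red(1)] reduced_carrier[OF red(2)] by auto
  consider "x \<otimes> c \<otimes> y \<notin> C" | "xs0 = []" | "ys0 = []" | "x \<otimes> c \<otimes> y \<in> C" "xs0 \<noteq> []" "ys0 \<noteq> []"
    by blast
  then show ?case
  proof cases
    case 1
    then show ?thesis
      using mult_reduced_no_cancel[OF red c] by (simp add: xs ys)
  next
    case 2
    then show ?thesis
      using mult_reduced_cancel_Cons[OF red(2) carrier(2) c] mult_reduced_no_cancel[OF red c]
      by (cases "x \<otimes> c \<otimes> y \<in> C") (auto simp: xs ys)
  next
    case 3
    then show ?thesis
      using mult_reduced_cancel_snoc[OF red(1) carrier(3) c] mult_reduced_no_cancel[OF red c]
      by (cases "x \<otimes> c \<otimes> y \<in> C") (auto simp: xs ys)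
  next
    case 4
    define m where "m = x \<otimes> c \<otimes> y"
    have "length xs0 < length xs" "reduced xs0" "reduced ys0" "m \<in> C"
      using red xs 4 unfolding reduced_snoc reduced_Cons m_def by auto
    then obtain zs c' where "reduced zs" "c' \<in> C"
      "mprod G xs0 \<otimes> m \<otimes> mprod G ys0 = mprod G zs \<otimes> c'"
      "inner_polarity (xs0 @ ys0) - 1 \<le> inner_polarity zs"
      using less.hyps[of xs0 ys0 m] 4 by blast
    moreover have "mprod G xs \<otimes> c \<otimes> mprod G ys = mprod G xs0 \<otimes> m \<otimes> mprod G ys0"
      using carrier c by (simp add: xs ys m_def mprod_append m_assoc)
    moreover have "polarity x + polarity y = 0"
      using polarity_cancel carrier c 4 by simp
    then have "inner_polarity (xs0 @ ys0) = inner_polarity xs + inner_polarity ys"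
      "inner_polarity (xs0 @ ys0) = inner_polarity (xs @ ys)"
      using 4 by (simp_all add: xs ys inner_polarity_append inner_polarity_snoc inner_polarity_Cons
          inner_polarity_middle)
    ultimately show ?thesis
      by auto
  qed
qed

lemma sum_polarity_rev_inv:
  "set xs \<subseteq> carrier G \<Longrightarrow> (\<Sum>z\<leftarrow>rev (map (\<lambda>x. inv x) xs). polarity z) = - (\<Sum>z\<leftarrow>xs. polarity z)"
  by (induction xs) (auto simp: polarity_inv)

definition interior_positive :: "'a set" where
  "interior_positive = {mprod G ws \<otimes> c | ws c. reduced ws \<and> c \<in> C \<and> 0 < inner_polarity ws}"

lemma interior_positive_carrier: "interior_positive \<subseteq> carrier G"
  unfolding interior_positive_def using reduced_carrier by auto

lemma interior_positive_mult:
  assumes "g \<in> interior_positive" "h \<in> interior_positive"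
  shows "g \<otimes> h \<in> interior_positive"
proof -
  obtain xs c ys d where xs: "reduced xs" "c \<in> C" "0 < inner_polarity xs" "g = mprod G xs \<otimes> c"
    and ys: "reduced ys" "d \<in> C" "0 < inner_polarity ys" "h = mprod G ys \<otimes> d"
    using assms unfolding interior_positive_def by blast
  have "xs \<noteq> []" "ys \<noteq> []"
    using xs(3) ys(3) by auto
  then obtain zs c' where zs: "reduced zs" "c' \<in> C" "0 < inner_polarity zs"
    "mprod G xs \<otimes> c \<otimes> mprod G ys = mprod G zs \<otimes> c'"
    using mult_reduced_inner_polarity[OF xs(1) _ ys(1) _ xs(2)] xs(3) ys(3) by fastforce
  have carrier: "mprod G xs \<in> carrier G" "mprod G ys \<in> carrier G" "mprod G zs \<in> carrier G"
    "c \<in> carrier G" "c' \<in> carrier G" "d \<in> carrier G"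
    using xs ys zs reduced_carrier by auto
  have "g \<otimes> h = (mprod G xs \<otimes> c \<otimes> mprod G ys) \<otimes> d"
    using carrier by (simp add: xs(4) ys(4) m_assoc)
  also have "\<dots> = mprod G zs \<otimes> (c' \<otimes> d)"
    using carrier by (simp add: zs(4) m_assoc)
  finally have "g \<otimes> h = mprod G zs \<otimes> (c' \<otimes> d)" .
  then show ?thesis
    using zs ys(2) unfolding interior_positive_def by blast
qed

lemma interior_positive_notin_A:
  assumes "g \<in> interior_positive"
  shows "g \<notin> A"
proof -
  obtain ws c where ws: "reduced ws" "c \<in> C" "0 < inner_polarity ws" "g = mprod G ws \<otimes> c"
    using assms unfolding interior_positive_def by blast
  have "2 \<le> length ws"
  proof (rule ccontr)
    assume "\<not> 2 \<le> length ws"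
    then have "butlast (tl ws) = []"
      by (simp flip: length_0_conv)
    then show False
      using ws(3) by (simp add: inner_polarity_def)
  qed
  then show ?thesis
    using reduced_mult_C_notin_A ws by simp
qed

lemma conjg_in_interior_positive:
  assumes d: "d \<in> Q" and us: "reduced us" "us \<noteq> []" "hd us \<notin> A"
  shows "conjg G d (mprod G us) \<in> interior_positive"
proof -
  let ?vs = "rev (map (\<lambda>x. inv x) us)"
  have carrier: "set us \<subseteq> carrier G" "set ?vs \<subseteq> carrier G" "d \<in> carrier G"
    using reduced_carrier[OF us(1)] cone_carrier[OF d] by auto
  have "inv (hd us) \<notin> A"
    using us inv_letter(2) unfolding reduced_def by (metis hd_in_set subsetD)
  then have "reduced (?vs @ d # us)"
    using us d cone_subset_A cone_letter reduced_rev_inv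
    unfolding reduced_append reduced_Cons alternate_def by (auto simp: last_rev hd_map)
  moreover have "tl ?vs = rev (map (\<lambda>x. inv x) (butlast us))"
    using butlast_rev[of "rev (map (\<lambda>x. inv x) us)"] by (simp add: map_butlast)
  then have "(\<Sum>z\<leftarrow>tl ?vs. polarity z) = - (\<Sum>z\<leftarrow>butlast us. polarity z)"
    using carrier sum_polarity_rev_inv[of "butlast us"] by (auto dest: in_set_butlastD)
  then have "inner_polarity (?vs @ d # us) = 1"
    using us(2) d by (simp add: inner_polarity_middle polarity_cone)
  moreover have "conjg G d (mprod G us) = mprod G (?vs @ d # us) \<otimes> \<one>"
    using carrier by (simp add: conjg_def inv_mprod mprod_append m_assoc)
  ultimately show ?thesis
    unfolding interior_positive_def by force
qed

end

section \<open>Normal forms\<close>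

context amalgam
begin

lemma normal_form_exists:
  assumes "g \<in> carrier G"
  shows "\<exists>ws c. reduced ws \<and> c \<in> C \<and> g = mprod G ws \<otimes> c"
proof -
  \<comment> \<open>products of normal forms come from the multiplication lemma for the empty cone\<close>
  interpret empty_cone: amalgam_cone G A B C "{}"
    by unfold_locales auto
  have factor: "\<exists>ws c. reduced ws \<and> c \<in> C \<and> h = mprod G ws \<otimes> c" if "h \<in> A \<union> B" for h
  proof (cases "h \<in> C")
    case True
    then show ?thesis
      by (intro exI[of _ "[]"] exI[of _ h]) auto
  next
    case False
    then show ?thesis
      using that letters_carrier
      by (intro exI[of _ "[h]"] exI[of _ \<one>]) (auto simp: reduced_def letters_def)
  qed
  have "g \<in> generate G (A \<union> B)"
    using assms generate_A_B by simp
  then show ?thesis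
  proof (induction rule: generate.induct)
    case one
    then show ?case
      by (intro exI[of _ "[]"] exI[of _ \<one>]) auto
  next
    case (incl h)
    then show ?case
      by (rule factor)
  next
    case (inv h)
    then show ?case
      using factor A.m_inv_closed B.m_inv_closed by blast
  next
    case (eng g h)
    then obtain xs c ys d where xs: "reduced xs" "c \<in> C" "g = mprod G xs \<otimes> c"
      and ys: "reduced ys" "d \<in> C" "h = mprod G ys \<otimes> d"
      by blast
    have carrier: "set xs \<subseteq> carrier G" "set ys \<subseteq> carrier G" "c \<in> carrier G" "d \<in> carrier G"
      using xs ys reduced_carrier by auto
    consider "ys = []" | "xs = []" "ys \<noteq> []" | "xs \<noteq> []" "ys \<noteq> []"
      by blast
    then show ?case
    proof cases
      case 1
      then show ?thesis
        using xs ys carrier by (intro exI[of _ xs] exI[of _ "c \<otimes> d"]) (auto simp: m_assoc)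
    next
      case 2
      then obtain y ys' where "ys = y # ys'"
        by (cases ys) auto
      then show ?thesis
        using 2 xs ys carrier reduced_Cons_C_mult[of y ys' c]
        by (intro exI[of _ "(c \<otimes> y) # ys'"] exI[of _ d]) (auto simp: m_assoc)
    next
      case 3
      then obtain zs c' where zs: "reduced zs" "c' \<in> C"
        "mprod G xs \<otimes> c \<otimes> mprod G ys = mprod G zs \<otimes> c'"
        using empty_cone.mult_reduced_inner_polarity[OF xs(1) _ ys(1) _ xs(2)] by blast
      then have "g \<otimes> h = mprod G zs \<otimes> (c' \<otimes> d)"
        using xs ys carrier reduced_carrier[OF zs(1)] by (simp flip: m_assoc add: zs(3))
      then show ?thesis
        using zs ys(2) by blast
    qed
  qed
qed

lemma notin_A_decompose:
  assumes "f \<in> carrier G" "f \<notin> A"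
  obtains a us where "a \<in> A" "reduced us" "us \<noteq> []" "hd us \<notin> A" "f = a \<otimes> mprod G us"
proof -
  obtain ws c where ws: "reduced ws" "c \<in> C" "f = mprod G ws \<otimes> c"
    using normal_form_exists[OF assms(1)] by blast
  have "ws \<noteq> []"
    using ws assms(2) C_subset_A by auto
  then obtain xs x where xs: "ws = xs @ [x]"
    by (cases ws rule: rev_cases) auto
  have "reduced (xs @ [x \<otimes> c])"
    using reduced_snoc_mult_C ws xs by blast
  moreover have "f = mprod G (xs @ [x \<otimes> c])"
    using reduced_carrier[OF ws(1)] ws(2,3) by (simp add: xs mprod_append m_assoc)
  ultimately obtain u vs where vs: "reduced (u # vs)" "f = mprod G (u # vs)"
    by (cases "xs @ [x \<otimes> c]") auto
  have carrier: "u \<in> carrier G" "set vs \<subseteq> carrier G"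
    using reduced_carrier[OF vs(1)] by auto
  show thesis
  proof (cases "u \<in> A")
    case True
    then have "vs \<noteq> []"
      using vs carrier assms(2) by auto
    then show thesis
      using that[of u vs] True vs unfolding reduced_Cons alternate_def by auto
  next
    case False
    then show thesis
      using that[of \<one> "u # vs"] vs carrier by simp
  qed
qed

end


section \<open>Conjugates of a normal subsemigroup\<close>

locale amalgam_normal_subsemigroup = amalgam +
  fixes P :: "'a set"
  assumes normal_subsemigroup: "normal_subsemigroup G P A" and P_disjoint_C: "P \<inter> C = {}"
begin

lemma P_subset_A: "P \<subseteq> A"
  and P_mult: "x \<in> P \<Longrightarrow> y \<in> P \<Longrightarrow> x \<otimes> y \<in> P"
  and conjg_in_P: "x \<in> P \<Longrightarrow> h \<in> A \<Longrightarrow> conjg G x h \<in> P"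
  using normal_subsemigroup unfolding normal_subsemigroup_def by auto

lemma P_carrier: "x \<in> P \<Longrightarrow> x \<in> carrier G"
  using P_subset_A A.subset by blast

lemma C_conj_in_P: "x \<in> P \<Longrightarrow> c \<in> C \<Longrightarrow> c \<otimes> x \<otimes> inv c \<in> P"
  using conjg_in_P[of x "inv c"] C_subset_A by (auto simp: conjg_def)

lemma in_set_mult_iff: "x \<in> P <#> C \<longleftrightarrow> (\<exists>p\<in>P. \<exists>c\<in>C. x = p \<otimes> c)"
  by (auto simp: set_mult_def)

lemma P_subset_set_mult: "P \<subseteq> P <#> C"
proof
  fix p
  assume "p \<in> P"
  then have "p = p \<otimes> \<one>"
    using P_carrier by simp
  then show "p \<in> P <#> C"
    using \<open>p \<in> P\<close> C.one_closed unfolding in_set_mult_iff by blast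
qed

sublocale amalgam_cone G A B C "P <#> C"
proof
  show "P <#> C \<subseteq> A"
    using mono_set_mult[where G = G, OF P_subset_A C_subset_A] subgroup_mult_id[OF subgroup_A]
    by simp
next
  fix x y
  assume "x \<in> P <#> C" "y \<in> P <#> C"
  then obtain p c q d where "p \<in> P" "c \<in> C" "q \<in> P" "d \<in> C" "x = p \<otimes> c" "y = q \<otimes> d"
    unfolding in_set_mult_iff by blast
  moreover from this have "x \<otimes> y = (p \<otimes> (c \<otimes> q \<otimes> inv c)) \<otimes> (c \<otimes> d)"
    by (simp add: P_carrier C.mem_carrier m_assoc flip: m_assoc[of "inv c" c])
  moreover have "p \<otimes> (c \<otimes> q \<otimes> inv c) \<in> P" "c \<otimes> d \<in> C"
    using P_mult C_conj_in_P calculation by auto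
  ultimately show "x \<otimes> y \<in> P <#> C"
    unfolding in_set_mult_iff by blast
next
  fix c x
  assume "c \<in> C" "x \<in> P <#> C"
  then obtain p d where "p \<in> P" "d \<in> C" "x = p \<otimes> d"
    unfolding in_set_mult_iff by blast
  moreover from this have "c \<otimes> x = (c \<otimes> p \<otimes> inv c) \<otimes> (c \<otimes> d)"
    using \<open>c \<in> C\<close> by (simp add: P_carrier C.mem_carrier m_assoc flip: m_assoc[of "inv c" c])
  moreover have "c \<otimes> p \<otimes> inv c \<in> P" "c \<otimes> d \<in> C"
    using \<open>c \<in> C\<close> C_conj_in_P calculation by auto
  ultimately show "c \<otimes> x \<in> P <#> C"
    unfolding in_set_mult_iff by blast
next
  fix x c
  assume "x \<in> P <#> C" "c \<in> C"
  then obtain p d where "p \<in> P" "d \<in> C" "x = p \<otimes> d"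
    unfolding in_set_mult_iff by blast
  moreover from this have "x \<otimes> c = p \<otimes> (d \<otimes> c)"
    using \<open>c \<in> C\<close> by (simp add: P_carrier C.mem_carrier m_assoc)
  ultimately show "x \<otimes> c \<in> P <#> C"
    using \<open>c \<in> C\<close> unfolding in_set_mult_iff by blast
next
  show "\<one> \<notin> P <#> C"
  proof
    assume "\<one> \<in> P <#> C"
    then obtain p c where "p \<in> P" "c \<in> C" "\<one> = p \<otimes> c"
      unfolding in_set_mult_iff by blast
    then have "p = inv c"
      by (simp add: P_carrier C.mem_carrier inv_equality)
    then show False
      using \<open>p \<in> P\<close> \<open>c \<in> C\<close> P_disjoint_C by auto
  qed
qed

lemma conjg_outside_A_in_interior_positive:
  assumes d: "d \<in> P" and f: "f \<in> carrier G" "f \<notin> A"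
  shows "conjg G d f \<in> interior_positive"
proof -
  obtain a us where us: "a \<in> A" "reduced us" "us \<noteq> []" "hd us \<notin> A" "f = a \<otimes> mprod G us"
    using notin_A_decompose f by blast
  have "conjg G d f = conjg G (conjg G d a) (mprod G us)"
    using us d P_carrier reduced_carrier A.subset by (simp add: conjg_mult)
  moreover have "conjg G d a \<in> P <#> C"
    using conjg_in_P[OF d us(1)] P_subset_set_mult by blast
  ultimately show ?thesis
    using conjg_in_interior_positive us(2-4) by simp
qed

lemma mprod_conjg_notin_A:
  assumes "ds \<noteq> []" "length fs = length ds" "set ds \<subseteq> P" "set fs \<subseteq> carrier G - A"
  shows "mprod G (map2 (conjg G) ds fs) \<notin> A"
proof -
  have "set (map2 (conjg G) ds fs) \<subseteq> interior_positive"
  proof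
    fix g
    assume "g \<in> set (map2 (conjg G) ds fs)"
    then obtain d f where df: "(d, f) \<in> set (zip ds fs)" "g = conjg G d f"
      by auto
    then have "d \<in> P" "f \<in> carrier G" "f \<notin> A"
      using assms(3,4) set_zip_leftD[OF df(1)] set_zip_rightD[OF df(1)] by auto
    then show "g \<in> interior_positive"
      using conjg_outside_A_in_interior_positive df(2) by simp
  qed
  moreover have "map2 (conjg G) ds fs \<noteq> []"
    using assms(1,2) length_0_conv[of fs] by simp
  ultimately have "mprod G (map2 (conjg G) ds fs) \<in> interior_positive"
    using mprod_in_subsemigroup[OF interior_positive_carrier interior_positive_mult] by blast
  then show ?thesis
    by (rule interior_positive_notin_A)
qed

end

theorem mainTheorem16:
  fixes G :: "('a, 'b) monoid_scheme" and A B C P :: "'a set"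
    and ds fs :: "'a list"
  assumes "amalgamated_free_product G A B C"
    and "normal_subsemigroup G P A"
    and "P \<inter> C = {}"
    and "length ds \<ge> 1" and "length fs = length ds"
    and "set ds \<subseteq> P"
    and "set fs \<subseteq> carrier G - A"
  shows "mprod G (map2 (conjg G) ds fs) \<notin> A"
proof -
  interpret amalgam G A B C
    using assms(1) by (rule amalgam_if_amalgamated_free_product)
  interpret amalgam_normal_subsemigroup G A B C P
    using assms(2,3) by unfold_locales
  have "ds \<noteq> []"
    using assms(4) by auto
  then show ?thesis
    using assms(5-7) by (rule mprod_conjg_notin_A)
qed

end
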